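(* Let $(H,\eta)$ be a rigid extended strip decomposition of an $n$-vertex graph $G$. Then $|E(H)|\leq n$ and $|V(H)|\leq 2n$.
   Context: All graphs are finite and simple. $T(H)$ denotes the set of triangles of $H$, a triangle on $x,y,z$ written $xyz$. Two vertex sets are complete to each other if every vertex of one is adjacent to every vertex of the other. An extended strip decomposition of a graph $G$ is a pair $(H,\eta)$ where $H$ is a simple graph and $\eta$ assigns: a set $\eta(x)\subseteq V(G)$ to each $x\in V(H)$; a set $\eta(xy)\subseteq V(G)$ to each $xy\in E(H)$, together with subsets $\eta(xy,x),\eta(xy,y)\subseteq \eta(xy)$; and a set $\eta(xyz)\subseteq V(G)$ to each $xyz\in T(H)$; such that (1) the sets $\eta(o)$, $o\in V(H)\cup E(H)\cup T(H)$, are pairwise disjoint (possibly empty) and their union is $V(G)$; (2) for every $x\in V(H)$ and distinct $y,z\in N_H(x)$, $\eta(xy,x)$ is complete to $\eta(xz,x)$; (3) every edge $uv\in E(G)$ either has both ends in one set $\eta(o)$, or $u\in\eta(xy,x)$, $v\in\eta(xz,x)$ for some $x\in V(H)$ and $y,z\in N_H(x)$, or $u\in\eta(xy,x)$, $v\in\eta(x)$ for some $xy\in E(H)$, or $u\in\eta(xyz)$, $v\in\eta(xy,x)\cap\eta(xy,y)$ for some $xyz\in T(H)$. It is rigid if $\eta(xy,x)\neq\emptyset$ for every edge $xy\in E(H)$ (for both ends $x$ of the edge), and $\eta(x)\neq\emptyset$ for every isolated vertex $x$ of $H$. *)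

theory Defs
  imports Main
begin

definition simple_graph :: "'a set \<Rightarrow> ('a \<Rightarrow> 'a \<Rightarrow> bool) \<Rightarrow> bool" where
  "simple_graph V E \<longleftrightarrow> finite V \<and> (\<forall>x y. E x y \<longrightarrow> x \<in> V \<and> y \<in> V)
     \<and> (\<forall>x y. E x y \<longrightarrow> E y x) \<and> (\<forall>x. \<not> E x x)"

definition edges :: "('a \<Rightarrow> 'a \<Rightarrow> bool) \<Rightarrow> 'a set set" where
  "edges E = {{x, y} | x y. E x y}"

definition triangles :: "('a \<Rightarrow> 'a \<Rightarrow> bool) \<Rightarrow> 'a set set" where
  "triangles E = {{x, y, z} | x y z. E x y \<and> E y z \<and> E x z}"

definition objects :: "'a set \<Rightarrow> ('a \<Rightarrow> 'a \<Rightarrow> bool) \<Rightarrow> 'a set set" where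
  "objects V E = (\<lambda>x. {x}) ` V \<union> edges E \<union> triangles E"

definition complete_to :: "('a \<Rightarrow> 'a \<Rightarrow> bool) \<Rightarrow> 'a set \<Rightarrow> 'a set \<Rightarrow> bool" where
  "complete_to E A B \<longleftrightarrow> (\<forall>u\<in>A. \<forall>v\<in>B. E u v)"

text \<open>Edge u v of G is allowed by (H, eta), in the orientation u, v (condition (3)).
  eta o gives the set of an object (vertex {x}, edge {x,y}, triangle {x,y,z});
  etaEnd {x,y} x is eta(xy,x).\<close>
definition allowed_edge ::
  "'b set \<Rightarrow> ('b \<Rightarrow> 'b \<Rightarrow> bool) \<Rightarrow> ('b set \<Rightarrow> 'a set) \<Rightarrow> ('b set \<Rightarrow> 'b \<Rightarrow> 'a set)
   \<Rightarrow> 'a \<Rightarrow> 'a \<Rightarrow> bool" where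
  "allowed_edge VH EH eta etaEnd u v \<longleftrightarrow>
     (\<exists>ob\<in>objects VH EH. u \<in> eta ob \<and> v \<in> eta ob)
   \<or> (\<exists>x y z. x \<in> VH \<and> EH x y \<and> EH x z \<and> u \<in> etaEnd {x, y} x \<and> v \<in> etaEnd {x, z} x)
   \<or> (\<exists>x y. EH x y \<and> u \<in> etaEnd {x, y} x \<and> v \<in> eta {x})
   \<or> (\<exists>x y z. EH x y \<and> EH y z \<and> EH x z \<and> u \<in> eta {x, y, z}
        \<and> v \<in> etaEnd {x, y} x \<inter> etaEnd {x, y} y)"

definition extended_strip_decomposition ::
  "'a set \<Rightarrow> ('a \<Rightarrow> 'a \<Rightarrow> bool) \<Rightarrow> 'b set \<Rightarrow> ('b \<Rightarrow> 'b \<Rightarrow> bool)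
   \<Rightarrow> ('b set \<Rightarrow> 'a set) \<Rightarrow> ('b set \<Rightarrow> 'b \<Rightarrow> 'a set) \<Rightarrow> bool" where
  "extended_strip_decomposition VG EG VH EH eta etaEnd \<longleftrightarrow>
     simple_graph VH EH
   \<and> (\<forall>e\<in>edges EH. \<forall>x\<in>e. etaEnd e x \<subseteq> eta e)
   \<and> (\<forall>o1\<in>objects VH EH. \<forall>o2\<in>objects VH EH. o1 \<noteq> o2 \<longrightarrow> eta o1 \<inter> eta o2 = {})
   \<and> (\<Union>ob\<in>objects VH EH. eta ob) = VG
   \<and> (\<forall>x\<in>VH. \<forall>y z. EH x y \<and> EH x z \<and> y \<noteq> z \<longrightarrow>
        complete_to EG (etaEnd {x, y} x) (etaEnd {x, z} x))
   \<and> (\<forall>u v. EG u v \<longrightarrow> allowed_edge VH EH eta etaEnd u v \<or> allowed_edge VH EH eta etaEnd v u)"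

definition rigid ::
  "'b set \<Rightarrow> ('b \<Rightarrow> 'b \<Rightarrow> bool) \<Rightarrow> ('b set \<Rightarrow> 'a set) \<Rightarrow> ('b set \<Rightarrow> 'b \<Rightarrow> 'a set) \<Rightarrow> bool" where
  "rigid VH EH eta etaEnd \<longleftrightarrow>
     (\<forall>x y. EH x y \<longrightarrow> etaEnd {x, y} x \<noteq> {})
   \<and> (\<forall>x\<in>VH. (\<forall>y. \<not> EH x y) \<longrightarrow> eta {x} \<noteq> {})"

end

theory Submission
  imports Defs "HOL-Library.Disjoint_Sets"
begin

text \<open>Rigidity makes the sets of the isolated vertices and of the edges of H nonempty; being
  pairwise disjoint subsets of V(G), there are at most n of them, so the number of isolated
  vertices plus the number of edges of H is at most n. Every other vertex of H lies on an edge,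
  and each edge covers two vertices, so |V(H)| is at most the number of isolated vertices plus
  twice the number of edges, hence at most 2n.\<close>

lemma card_le_card_if_disjoint_family_nonempty:
  assumes "finite V" "disjoint_family_on A I"
    and "\<And>i. i \<in> I \<Longrightarrow> A i \<noteq> {}" "\<And>i. i \<in> I \<Longrightarrow> A i \<subseteq> V"
  shows "card I \<le> card V"
proof -
  define pick where "pick i = (SOME v. v \<in> A i)" for i
  have pick_in: "pick i \<in> A i" if "i \<in> I" for i
    unfolding pick_def using assms(3)[OF that] by (simp add: some_in_eq)
  have "inj_on pick I"
  proof (rule inj_onI)
    fix i j assume "i \<in> I" "j \<in> I" "pick i = pick j"
    then have "A i \<inter> A j \<noteq> {}" using pick_in by fastforce
    with \<open>i \<in> I\<close> \<open>j \<in> I\<close> show "i = j" using assms(2) unfolding disjoint_family_on_def by blast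
  qed
  moreover have "pick ` I \<subseteq> V" using pick_in assms(4) by blast
  ultimately show ?thesis using card_inj_on_le assms(1) by blast
qed

definition isolated_vertices :: "'b set \<Rightarrow> ('b \<Rightarrow> 'b \<Rightarrow> bool) \<Rightarrow> 'b set" where
  "isolated_vertices V E = {x \<in> V. \<forall>y. \<not> E x y}"

lemma card_edge:
  assumes "simple_graph V E" "e \<in> edges E"
  shows "card e = 2"
  using assms unfolding simple_graph_def edges_def by (auto simp: card_insert_if)

lemma edges_subset_Pow:
  assumes "simple_graph V E"
  shows "edges E \<subseteq> Pow V"
  using assms unfolding simple_graph_def edges_def by blast

lemma finite_edges:
  assumes "simple_graph V E"
  shows "finite (edges E)"
  using edges_subset_Pow[OF assms] assms unfolding simple_graph_def
  by (meson finite_Pow_iff finite_subset)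

lemma card_le_isolated_vertices_plus_twice_edges:
  assumes G: "simple_graph V E"
  shows "card V \<le> card (isolated_vertices V E) + 2 * card (edges E)"
proof -
  have finV: "finite V" using G unfolding simple_graph_def by blast
  have iso_sub: "isolated_vertices V E \<subseteq> V" unfolding isolated_vertices_def by blast
  have "V - isolated_vertices V E \<subseteq> \<Union>(edges E)"
    unfolding isolated_vertices_def edges_def by blast
  then have "card (V - isolated_vertices V E) \<le> card (\<Union>(edges E))"
    using edges_subset_Pow[OF G] finV by (intro card_mono) (auto intro: finite_subset)
  also have "\<dots> \<le> (\<Sum>e\<in>edges E. card e)"
    by (rule card_Union_le_sum_card)
  also have "\<dots> = 2 * card (edges E)"
    using card_edge[OF G] by simp
  finally show ?thesis
    using card_Diff_subset[OF finite_subset[OF iso_sub finV] iso_sub]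
      card_mono[OF finV iso_sub] by linarith
qed

lemma isolated_singletons_disjoint_edges:
  assumes "simple_graph V E"
  shows "(\<lambda>x. {x}) ` isolated_vertices V E \<inter> edges E = {}"
  using card_edge[OF assms] by fastforce

lemma card_isolated_vertices_plus_edges_le:
  assumes G: "simple_graph VG EG"
    and D: "extended_strip_decomposition VG EG VH EH eta etaEnd"
    and R: "rigid VH EH eta etaEnd"
  shows "card (isolated_vertices VH EH) + card (edges EH) \<le> card VG"
proof -
  let ?F = "(\<lambda>x. {x}) ` isolated_vertices VH EH \<union> edges EH"
  note D = D[unfolded extended_strip_decomposition_def]
  have H: "simple_graph VH EH" using D by (elim conjE)
  have ends: "\<forall>e\<in>edges EH. \<forall>x\<in>e. etaEnd e x \<subseteq> eta e" using D by (elim conjE)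
  have disj: "disjoint_family_on eta (objects VH EH)"
    using D unfolding disjoint_family_on_def by (elim conjE)
  have cover: "(\<Union>ob\<in>objects VH EH. eta ob) = VG" using D by (elim conjE)
  have F_objects: "?F \<subseteq> objects VH EH"
    unfolding objects_def isolated_vertices_def by blast
  have "disjoint_family_on eta ?F"
    by (rule disjoint_family_on_mono[OF F_objects disj])
  moreover have "eta ob \<noteq> {}" if ob: "ob \<in> ?F" for ob
  proof -
    consider x where "x \<in> isolated_vertices VH EH" "ob = {x}"
      | x y where "EH x y" "ob = {x, y}"
      using ob unfolding edges_def by blast
    then show ?thesis
    proof cases
      case 1
      then show ?thesis using R unfolding rigid_def isolated_vertices_def by blast
    next
      case (2 x y)
      then have "etaEnd {x, y} x \<subseteq> eta ob"
        using ends unfolding edges_def by blast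
      with 2 show ?thesis using R unfolding rigid_def by blast
    qed
  qed
  moreover have "eta ob \<subseteq> VG" if "ob \<in> ?F" for ob
    using cover F_objects that by blast
  moreover have "finite VG" using G unfolding simple_graph_def by blast
  ultimately have "card ?F \<le> card VG"
    by (intro card_le_card_if_disjoint_family_nonempty)
  moreover have "finite (isolated_vertices VH EH)"
    using H unfolding simple_graph_def isolated_vertices_def by simp
  ultimately show ?thesis
    using isolated_singletons_disjoint_edges[OF H] finite_edges[OF H]
    by (simp add: card_Un_disjoint card_image)
qed

theorem mainTheorem4:
  fixes VG :: "'a set" and EG :: "'a \<Rightarrow> 'a \<Rightarrow> bool"
    and VH :: "'b set" and EH :: "'b \<Rightarrow> 'b \<Rightarrow> bool"
    and eta :: "'b set \<Rightarrow> 'a set" and etaEnd :: "'b set \<Rightarrow> 'b \<Rightarrow> 'a set"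
    and n :: nat
  assumes "simple_graph VG EG"
    and "card VG = n"
    and "extended_strip_decomposition VG EG VH EH eta etaEnd"
    and "rigid VH EH eta etaEnd"
  shows "card (edges EH) \<le> n \<and> card VH \<le> 2 * n"
proof -
  have H: "simple_graph VH EH"
    using assms(3) unfolding extended_strip_decomposition_def by (elim conjE)
  have "card (isolated_vertices VH EH) + card (edges EH) \<le> n"
    using card_isolated_vertices_plus_edges_le[OF assms(1,3,4)] assms(2) by simp
  then show ?thesis
    using card_le_isolated_vertices_plus_twice_edges[OF H] by linarith
qed

end
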